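(* Let $\Omega := \{0,1\}^{\mathbb{Z}}$ and let $\tau:\Omega\to\Omega$ be the shift defined by $(\tau\omega)(x) := \omega(x-1)$ for $\omega\in\Omega$, $x\in\mathbb{Z}$; for $A\subseteq\Omega$ write $\tau A := \{\tau\omega : \omega\in A\}$. Let $\mathcal{F}$ be a $\sigma$-algebra on $\Omega$ that contains all singletons and is closed under the shift (that is, $A\in\mathcal{F}$ implies $\tau A\in\mathcal{F}$). If there exists a measure $\mu$ on $\mathcal{F}$ that is shift-invariant (that is, $\mu=\mu\circ\tau$), satisfies $\mu(\Omega)\in(0,\infty)$, and satisfies $\mu(\{\omega\})=0$ for all $\omega\in\Omega$, then $\mathcal{F}$ does not contain all subsets of $\Omega$.
   Context: The axiom of choice (in the form of the well-ordering principle) is assumed. *)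

theory Defs
  imports "HOL-Analysis.Analysis"
begin

definition shift :: "(int \<Rightarrow> bool) \<Rightarrow> (int \<Rightarrow> bool)" where
  "shift \<omega> = (\<lambda>x. \<omega> (x - 1))"

end

(* The points with a nonzero period form a countable set, hence a null set. The shift acts
   freely on the remaining, aperiodic points, so picking one point from each of their orbits
   (Vitali's construction) splits them into the pairwise disjoint translates shift^k V, k in Z.
   If every set were measurable, all translates would have the measure of V; infinitely many
   disjoint sets of equal measure in a finite measure space are null, so the whole space
   would be null. *)

theory Submission
  imports Defs
begin

definition shift_by :: "int \<Rightarrow> (int \<Rightarrow> bool) \<Rightarrow> (int \<Rightarrow> bool)" where
  "shift_by k \<omega> = (\<lambda>x. \<omega> (x - k))"

lemma shift_by_0 [simp]: "shift_by 0 \<omega> = \<omega>"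
  by (simp add: shift_by_def)

lemma shift_by_shift_by [simp]: "shift_by k (shift_by l \<omega>) = shift_by (k + l) \<omega>"
  by (simp add: shift_by_def algebra_simps)

lemma shift_eq_shift_by_1: "shift = shift_by 1"
  by (simp add: fun_eq_iff shift_def shift_by_def)

lemma shift_by_eq_iff [simp]: "shift_by k \<omega> = shift_by k \<eta> \<longleftrightarrow> \<omega> = \<eta>"
  by (metis add.left_inverse shift_by_0 shift_by_shift_by)

lemma shift_by_mult_period:
  assumes "shift_by k \<omega> = \<omega>"
  shows "shift_by (j * k) \<omega> = \<omega>"
proof (induction j rule: int_induct[where k = 0])
  case (step1 j)
  then show ?case
    using assms by (metis distrib_right mult_1 shift_by_shift_by add.commute)
next
  case (step2 j)
  have "shift_by (j * k) \<omega> = shift_by k (shift_by ((j - 1) * k) \<omega>)"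
    by (simp add: algebra_simps)
  then show ?case
    using step2 assms by (metis shift_by_eq_iff)
qed simp

lemma periodic_eq_mod:
  assumes "shift_by k \<omega> = \<omega>"
  shows "\<omega> x = \<omega> (x mod k)"
proof -
  have "\<omega> x = shift_by (x div k * k) \<omega> x"
    using shift_by_mult_period[OF assms] by simp
  also have "\<dots> = \<omega> (x mod k)"
    by (simp add: shift_by_def minus_div_mult_eq_mod)
  finally show ?thesis .
qed

definition aperiodic :: "(int \<Rightarrow> bool) set" where
  "aperiodic = {\<omega>. \<forall>k. shift_by k \<omega> = \<omega> \<longrightarrow> k = 0}"

lemma shift_by_in_aperiodic_iff [simp]: "shift_by j \<omega> \<in> aperiodic \<longleftrightarrow> \<omega> \<in> aperiodic"
proof -
  have "shift_by k (shift_by j \<omega>) = shift_by j \<omega> \<longleftrightarrow> shift_by k \<omega> = \<omega>" for k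
    by (metis add.commute shift_by_eq_iff shift_by_shift_by)
  then show ?thesis
    by (simp add: aperiodic_def)
qed

text \<open>A point of period \<open>p > 0\<close> is determined by the word of its first \<open>p\<close> letters.\<close>
lemma countable_periodic: "countable (- aperiodic)"
proof -
  let ?periodic_word = "\<lambda>(p :: int, xs :: bool list). \<lambda>x. xs ! nat (x mod p)"
  have "- aperiodic \<subseteq> range ?periodic_word"
  proof
    fix \<omega> assume "\<omega> \<in> - aperiodic"
    then obtain k where "k \<noteq> 0" "shift_by k \<omega> = \<omega>"
      by (auto simp: aperiodic_def)
    moreover have "shift_by (- k) \<omega> = \<omega>" if "shift_by k \<omega> = \<omega>"
      using shift_by_mult_period[OF that, of "- 1"] by simp
    ultimately have p: "\<bar>k\<bar> > 0" "shift_by \<bar>k\<bar> \<omega> = \<omega>"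
      by (auto simp: abs_if)
    define xs where "xs = map (\<lambda>i. \<omega> (int i)) [0..<nat \<bar>k\<bar>]"
    have "\<omega> x = xs ! nat (x mod \<bar>k\<bar>)" for x
      using p periodic_eq_mod[OF p(2), of x] by (simp add: xs_def nat_less_iff)
    then have "\<omega> = ?periodic_word (\<bar>k\<bar>, xs)"
      by auto
    then show "\<omega> \<in> range ?periodic_word"
      by blast
  qed
  then show ?thesis
    by (rule countable_subset) simp
qed

lemma aperiodic_shift_transversal:
  obtains V where "aperiodic = (\<Union>k. shift_by k ` V)"
    and "disjoint_family (\<lambda>k. shift_by k ` V)"
proof -
  define orbit where "orbit \<omega> = range (\<lambda>k. shift_by k \<omega>)" for \<omega>
  define rep where "rep \<omega> = (SOME \<eta>. \<eta> \<in> orbit \<omega>)" for \<omega>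
  have orbit_shift_by: "orbit (shift_by j \<omega>) = orbit \<omega>" for j \<omega>
  proof -
    have "orbit (shift_by j \<omega>) = (\<lambda>k. shift_by k \<omega>) ` range (\<lambda>k. k + j)"
      unfolding orbit_def image_image by simp
    also have "\<dots> = orbit \<omega>"
      by (simp only: surj_plus_right orbit_def)
    finally show ?thesis .
  qed
  have "rep \<omega> \<in> orbit \<omega>" for \<omega>
    unfolding rep_def by (rule someI[of _ \<omega>]) (simp add: orbit_def range_eqI[of _ _ 0])
  then have "\<forall>\<omega>. \<exists>j. rep \<omega> = shift_by j \<omega>"
    by (auto simp: orbit_def)
  then obtain j where rep_eq: "rep \<omega> = shift_by (j \<omega>) \<omega>" for \<omega>
    by metis
  have orbit_rep: "orbit (rep \<omega>) = orbit \<omega>" for \<omega>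
    using orbit_shift_by rep_eq by simp
  define V where "V = rep ` aperiodic"
  show thesis
  proof
    show "aperiodic = (\<Union>k. shift_by k ` V)"
    proof (intro subset_antisym subsetI)
      fix \<omega> assume "\<omega> \<in> aperiodic"
      moreover have "\<omega> = shift_by (- j \<omega>) (rep \<omega>)"
        using rep_eq by simp
      ultimately show "\<omega> \<in> (\<Union>k. shift_by k ` V)"
        unfolding V_def by blast
    qed (auto simp: V_def rep_eq)
    show "disjoint_family (\<lambda>k. shift_by k ` V)"
    proof (unfold disjoint_family_on_def, intro ballI impI, rule ccontr)
      fix k l assume "k \<noteq> l" "shift_by k ` V \<inter> shift_by l ` V \<noteq> {}"
      then obtain a b where "b \<in> aperiodic"
        and shifted_eq: "shift_by k (rep a) = shift_by l (rep b)"
        by (auto simp: V_def)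
      have rep_a: "rep a = shift_by (l - k) (rep b)"
        using arg_cong[OF shifted_eq, of "shift_by (- k)"] by simp
      then have "orbit (rep a) = orbit (rep b)"
        using orbit_shift_by by simp
      then have "orbit a = orbit b"
        using orbit_rep by simp
      then have "shift_by (l - k) (rep b) = rep b"
        using rep_a by (simp add: rep_def)
      moreover have "rep b \<in> aperiodic"
        using \<open>b \<in> aperiodic\<close> rep_eq by simp
      ultimately show False
        using \<open>k \<noteq> l\<close> by (auto simp: aperiodic_def)
    qed
  qed
qed

lemma (in finite_measure) measure_disjoint_family_const_eq_0:
  fixes A :: "nat \<Rightarrow> 'a set"
  assumes "range A \<subseteq> sets M" "disjoint_family A"
    and "\<And>n. measure M (A n) = measure M (A 0)"
  shows "measure M (A 0) = 0"
proof -
  have "summable (\<lambda>n. measure M (A n))"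
    using finite_measure_UNION[OF assms(1,2)] by (rule sums_summable)
  moreover have "(\<lambda>n. measure M (A n)) = (\<lambda>_. measure M (A 0))"
    using assms(3) by (intro ext)
  ultimately show ?thesis
    by (simp add: summable_const_iff)
qed

lemma emeasure_shift_by_image:
  assumes "sets M = Pow UNIV"
    and "\<forall>A\<in>sets M. emeasure M A = emeasure M (shift ` A)"
  shows "emeasure M (shift_by k ` A) = emeasure M A"
proof -
  have nat_shift: "emeasure M (shift_by (int n) ` A) = emeasure M A" for n A
  proof (induction n)
    case (Suc n)
    have "shift_by (int (Suc n)) ` A = shift ` (shift_by (int n) ` A)"
      by (simp add: shift_eq_shift_by_1 image_image add.commute)
    then show ?case
      using assms Suc by simp
  qed simp
  show ?thesis
  proof (cases "k \<ge> 0")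
    case True
    then show ?thesis
      using nat_shift[of "nat k"] by simp
  next
    case False
    have "A = shift_by (int (nat (- k))) ` (shift_by k ` A)"
      using False by (simp add: image_image)
    then show ?thesis
      using nat_shift[of "nat (- k)" "shift_by k ` A"] by simp
  qed
qed

theorem theorem1:
  fixes M :: "(int \<Rightarrow> bool) measure"
  assumes "space M = UNIV"
    and "\<forall>\<omega>. {\<omega>} \<in> sets M"
    and "\<forall>A\<in>sets M. shift ` A \<in> sets M"
    and "\<forall>A\<in>sets M. emeasure M A = emeasure M (shift ` A)"
    and "0 < emeasure M UNIV" and "emeasure M UNIV < \<infinity>"
    and "\<forall>\<omega>. emeasure M {\<omega>} = 0"
  shows "sets M \<noteq> Pow UNIV"
proof
  assume all_sets: "sets M = Pow UNIV"
  interpret finite_measure M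
    using assms(1,6) by (intro finite_measureI) simp
  have invariant: "emeasure M (shift_by k ` A) = emeasure M A" for k A
    using emeasure_shift_by_image[OF all_sets assms(4)] .
  obtain V where cover: "aperiodic = (\<Union>k. shift_by k ` V)"
    and disjoint: "disjoint_family (\<lambda>k. shift_by k ` V)"
    by (rule aperiodic_shift_transversal)
  have "measure M (shift_by (int 0) ` V) = 0"
    using disjoint all_sets invariant
    by (intro measure_disjoint_family_const_eq_0) (auto simp: disjoint_family_on_def measure_def)
  then have "aperiodic \<in> null_sets M"
    unfolding cover using invariant all_sets
    by (intro null_sets_UN') (auto simp: emeasure_eq_measure)
  moreover have "(\<Union>\<omega>\<in>- aperiodic. {\<omega>}) \<in> null_sets M"
    using countable_periodic assms(2,7) by (intro null_sets_UN') auto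
  ultimately have "UNIV \<in> null_sets M"
    using null_sets.Un[of aperiodic M "- aperiodic"] by simp
  then have "emeasure M UNIV = 0"
    by (rule null_setsD1)
  then show False
    using assms(5) by simp
qed

end
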